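(* In Streamlet, an honest validator (one following the protocol) never violates a Streamlet slashing condition.
   Context: Streamlet with $n$ validators: time is divided into epochs, each with a leader. The leader of epoch $e$ proposes a block extending one of the longest notarized chains it has seen; an honest validator votes at most once per epoch, and only for the leader's proposal if it extends one of the longest notarized chains the validator has seen. A block is notarized once it has votes from at least $2n/3$ validators. For a block $B$, $e_B$ denotes its epoch and $|B|$ its depth. Streamlet slashing conditions: a validator violates a slashing condition if (1) it votes for two blocks $B_1,B_2$ with $e_{B_1}=e_{B_2}$, or (2) it votes for $B_1,B_2$ with $e_{B_1}<e_{B_2}$ but $|B_1|>|B_2|$. *)

theory Defs
  imports Main
begin

text \<open>A block is identified with its chain back to genesis: the list
  [B_k, ..., B_1] of block contents (epoch, payload), the head being the block
  itself. Genesis is the empty list.\<close>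

type_synonym 'p block = "(nat \<times> 'p) list"

definition epoch :: "'p block \<Rightarrow> nat" where
  "epoch B = (case B of [] \<Rightarrow> 0 | b # _ \<Rightarrow> fst b)"

definition depth :: "'p block \<Rightarrow> nat" where
  "depth B = length B"

definition notarized :: "nat \<Rightarrow> 'v set \<Rightarrow> ('v \<times> 'p block) set \<Rightarrow> 'p block \<Rightarrow> bool" where
  "notarized n V S B \<longleftrightarrow> B = [] \<or> 3 * card {v \<in> V. (v, B) \<in> S} \<ge> 2 * n"

definition notarized_chain :: "nat \<Rightarrow> 'v set \<Rightarrow> ('v \<times> 'p block) set \<Rightarrow> 'p block \<Rightarrow> bool" where
  "notarized_chain n V S C \<longleftrightarrow> (\<forall>k \<le> length C. notarized n V S (drop k C))"

definition longest_notarized_chain :: "nat \<Rightarrow> 'v set \<Rightarrow> ('v \<times> 'p block) set \<Rightarrow> 'p block \<Rightarrow> bool" where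
  "longest_notarized_chain n V S C \<longleftrightarrow>
     notarized_chain n V S C \<and> (\<forall>C'. notarized_chain n V S C' \<longrightarrow> depth C' \<le> depth C)"

definition extends :: "'p block \<Rightarrow> 'p block \<Rightarrow> bool" where
  "extends B C \<longleftrightarrow> (\<exists>b. B = b # C)"

text \<open>Honest validator behaviour.
  seen e: the votes the validator has seen when it votes in epoch e (monotone in e);
  leader e: the leader of epoch e; proposed v e: blocks proposed by v in epoch e;
  votes: the set of pairs (e, B) meaning the validator voted for B in epoch e.\<close>

definition honest_validator ::
  "nat \<Rightarrow> 'v set \<Rightarrow> (nat \<Rightarrow> ('v \<times> 'p block) set) \<Rightarrow> (nat \<Rightarrow> 'v)
     \<Rightarrow> ('v \<Rightarrow> nat \<Rightarrow> 'p block set) \<Rightarrow> (nat \<times> 'p block) set \<Rightarrow> bool" where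
  "honest_validator n V seen leader proposed votes \<longleftrightarrow>
     (\<forall>e e'. e \<le> e' \<longrightarrow> seen e \<subseteq> seen e') \<and>
     (\<forall>e B B'. (e, B) \<in> votes \<longrightarrow> (e, B') \<in> votes \<longrightarrow> B = B') \<and>
     (\<forall>e B. (e, B) \<in> votes \<longrightarrow>
        B \<in> proposed (leader e) e \<and> B \<noteq> [] \<and> epoch B = e \<and>
        (\<exists>C. extends B C \<and> longest_notarized_chain n V (seen e) C))"

definition violates_slashing :: "'p block set \<Rightarrow> bool" where
  "violates_slashing W \<longleftrightarrow>
     (\<exists>B1\<in>W. \<exists>B2\<in>W. B1 \<noteq> B2 \<and> epoch B1 = epoch B2) \<or>
     (\<exists>B1\<in>W. \<exists>B2\<in>W. epoch B1 < epoch B2 \<and> depth B1 > depth B2)"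

end

theory Submission
  imports Defs
begin

text \<open>An honest validator votes in epoch e only for a block of epoch e, and at most once
  per epoch, so two of its votes for blocks of the same epoch are for the same block. Since
  the set of votes it has seen only grows, a notarized chain seen in an earlier epoch is
  still notarized later, so the longest notarized chain it extends can only get longer:
  the depth of the blocks it votes for is monotone in their epochs.\<close>

lemma notarized_mono:
  assumes "finite V" "S \<subseteq> S'" "notarized n V S B"
  shows "notarized n V S' B"
proof -
  have "card {v \<in> V. (v, B) \<in> S} \<le> card {v \<in> V. (v, B) \<in> S'}"
    using assms(1,2) by (intro card_mono) auto
  then show ?thesis
    using assms(3) unfolding notarized_def by auto
qed

lemma notarized_chain_mono:
  assumes "finite V" "S \<subseteq> S'" "notarized_chain n V S C"
  shows "notarized_chain n V S' C"
  using assms notarized_mono unfolding notarized_chain_def by blast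

lemma longest_notarized_chain_depth_mono:
  assumes "finite V" "S \<subseteq> S'"
    and "longest_notarized_chain n V S C" "longest_notarized_chain n V S' C'"
  shows "depth C \<le> depth C'"
  using assms notarized_chain_mono unfolding longest_notarized_chain_def by blast

lemma depth_extends:
  assumes "extends B C"
  shows "depth B = Suc (depth C)"
  using assms unfolding extends_def depth_def by auto

lemma honest_vote_epoch:
  assumes "honest_validator n V seen leader proposed votes" "(e, B) \<in> votes"
  shows "epoch B = e"
  using assms unfolding honest_validator_def by blast

lemma honest_vote_epoch_inj:
  assumes "honest_validator n V seen leader proposed votes"
    and "(e1, B1) \<in> votes" "(e2, B2) \<in> votes" "epoch B1 = epoch B2"
  shows "B1 = B2"
proof -
  have "e1 = e2"
    using assms honest_vote_epoch by metis
  then show ?thesis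
    using assms(1-3) unfolding honest_validator_def by blast
qed

lemma honest_vote_depth_mono:
  assumes "finite V" "honest_validator n V seen leader proposed votes"
    and "(e1, B1) \<in> votes" "(e2, B2) \<in> votes" "epoch B1 < epoch B2"
  shows "depth B1 \<le> depth B2"
proof -
  obtain C1 where C1: "extends B1 C1" "longest_notarized_chain n V (seen e1) C1"
    using assms(2,3) unfolding honest_validator_def by blast
  obtain C2 where C2: "extends B2 C2" "longest_notarized_chain n V (seen e2) C2"
    using assms(2,4) unfolding honest_validator_def by blast
  have "e1 \<le> e2"
    using assms(2-5) honest_vote_epoch by fastforce
  then have "seen e1 \<subseteq> seen e2"
    using assms(2) unfolding honest_validator_def by blast
  then have "depth C1 \<le> depth C2"
    using longest_notarized_chain_depth_mono[OF assms(1) _ C1(2) C2(2)] by blast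
  then show ?thesis
    using depth_extends[OF C1(1)] depth_extends[OF C2(1)] by simp
qed

theorem lemma2:
  fixes n :: nat and V :: "'v set"
    and seen :: "nat \<Rightarrow> ('v \<times> 'p block) set"
    and leader :: "nat \<Rightarrow> 'v" and proposed :: "'v \<Rightarrow> nat \<Rightarrow> 'p block set"
    and votes :: "(nat \<times> 'p block) set"
  assumes "finite V" and "card V = n"
    and "honest_validator n V seen leader proposed votes"
  shows "\<not> violates_slashing (snd ` votes)"
  using honest_vote_epoch_inj[OF assms(3)] honest_vote_depth_mono[OF assms(1,3)]
  unfolding violates_slashing_def by fastforce

end
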